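(* Let $V$ be a finite nonempty set, $c\in\mathbb{R}^{P_V}$ and $\hat x$ a maximally specific partial function on $P_V$. Define $x^+\in\{0,1\}^{P_V}$ by $x^+_e=1$ if $e\notin\operatorname{dom}(\hat x)$ and $c_e\ge0$; $x^+_e=0$ if $e\notin\operatorname{dom}(\hat x)$ and $c_e<0$; $x^+_e=\hat x_e$ if $e\in\operatorname{dom}(\hat x)$. Let $ij\in P_V\setminus\operatorname{dom}(\hat x)$ with $c_{ij}\ge0$. If $x^+\in X_V[\hat x]$, then $$\max_{x\in X_V[\hat x],\,x_{ij}=1}\varphi_c(x)=\varphi_c(x^+),$$ and, writing $\mathcal U=\{U\subseteq V\mid ij\in U\times(V\setminus U),\ (U\times(V\setminus U))\cap\hat x^{-1}(1)=\emptyset\}$ and $\sigma_U(x)$ for the vector with $\sigma_U(x)_{pq}=0$ if $pq\in U\times(V\setminus U)$ and $\sigma_U(x)_{pq}=x_{pq}$ otherwise, $$\max_{x\in X_V[\hat x],\,x_{ij}=0}\varphi_c(x)=\max_{U\in\mathcal U}\varphi_c(\sigma_U(x^+))=\varphi_c(x^+)-\min_{U\in\mathcal U}\sum_{pq\in(U\times(V\setminus U))\setminus\hat x^{-1}(0)}c_{pq}^+ .$$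
   Context: $P_V=\{pq\in V^2\mid p\neq q\}$; $X_V$ is the set of $x\in\{0,1\}^{P_V}$ with $x_{pq}+x_{qr}-x_{pr}\le 1$ for all pairwise distinct $p,q,r\in V$; $\varphi_c(x)=\sum_{pq\in P_V}c_{pq}x_{pq}$. A partial function $\tilde x$ is a map from $\operatorname{dom}(\tilde x)\subseteq P_V$ to $\{0,1\}$, $\tilde x^{-1}(b)$ the pairs mapped to $b$, and $X_V[\tilde x]=\{x\in X_V\mid x_{pq}=\tilde x_{pq}\ \forall pq\in\operatorname{dom}(\tilde x)\}$. A pair $pq$ is decided if $x_{pq}=x'_{pq}$ for all $x,x'\in X_V[\tilde x]$; $\tilde x$ is maximally specific if $X_V[\tilde x]\ne\emptyset$ and the decided pairs are exactly $\operatorname{dom}(\tilde x)$. For real $a$, $a^+=\max(a,0)$. *)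

theory Defs
  imports Complex_Main
begin

definition pairs :: "'a set \<Rightarrow> ('a \<times> 'a) set" where
  "pairs V = {(p, q). p \<in> V \<and> q \<in> V \<and> p \<noteq> q}"

text \<open>Vectors in {0,1}^(P_V) are represented as int-valued functions on pairs,
  taking values in {0,1} on P_V and (by convention) 0 outside P_V.\<close>
definition feasible :: "'a set \<Rightarrow> ('a \<times> 'a \<Rightarrow> int) set" where
  "feasible V = {x. (\<forall>e\<in>pairs V. x e \<in> {0, 1}) \<and> (\<forall>e. e \<notin> pairs V \<longrightarrow> x e = 0) \<and>
     (\<forall>p\<in>V. \<forall>q\<in>V. \<forall>r\<in>V. p \<noteq> q \<and> q \<noteq> r \<and> p \<noteq> r \<longrightarrow>
        x (p, q) + x (q, r) - x (p, r) \<le> 1)}"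

definition phi :: "('a \<times> 'a \<Rightarrow> real) \<Rightarrow> 'a set \<Rightarrow> ('a \<times> 'a \<Rightarrow> int) \<Rightarrow> real" where
  "phi c V x = (\<Sum>e\<in>pairs V. c e * of_int (x e))"

definition partial_fun :: "'a set \<Rightarrow> ('a \<times> 'a \<Rightarrow> int option) \<Rightarrow> bool" where
  "partial_fun V xh \<longleftrightarrow> dom xh \<subseteq> pairs V \<and> ran xh \<subseteq> {0, 1}"

definition feasible_restr :: "'a set \<Rightarrow> ('a \<times> 'a \<Rightarrow> int option) \<Rightarrow> ('a \<times> 'a \<Rightarrow> int) set" where
  "feasible_restr V xh = {x \<in> feasible V. \<forall>e\<in>dom xh. xh e = Some (x e)}"

definition decided :: "'a set \<Rightarrow> ('a \<times> 'a \<Rightarrow> int option) \<Rightarrow> ('a \<times> 'a) set" where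
  "decided V xh = {e \<in> pairs V. \<forall>x\<in>feasible_restr V xh. \<forall>x'\<in>feasible_restr V xh. x e = x' e}"

definition max_specific :: "'a set \<Rightarrow> ('a \<times> 'a \<Rightarrow> int option) \<Rightarrow> bool" where
  "max_specific V xh \<longleftrightarrow> feasible_restr V xh \<noteq> {} \<and> decided V xh = dom xh"

definition xplus :: "'a set \<Rightarrow> ('a \<times> 'a \<Rightarrow> real) \<Rightarrow> ('a \<times> 'a \<Rightarrow> int option) \<Rightarrow> 'a \<times> 'a \<Rightarrow> int" where
  "xplus V c xh e = (if e \<in> pairs V then
      (case xh e of Some b \<Rightarrow> b | None \<Rightarrow> (if c e \<ge> 0 then 1 else 0)) else 0)"

definition cut :: "'a set \<Rightarrow> 'a set \<Rightarrow> ('a \<times> 'a) set" where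
  "cut V U = U \<times> (V - U)"

definition sigma :: "'a set \<Rightarrow> 'a set \<Rightarrow> ('a \<times> 'a \<Rightarrow> int) \<Rightarrow> 'a \<times> 'a \<Rightarrow> int" where
  "sigma V U x e = (if e \<in> cut V U then 0 else x e)"

definition cutsets :: "'a set \<Rightarrow> ('a \<times> 'a \<Rightarrow> int option) \<Rightarrow> 'a \<times> 'a \<Rightarrow> 'a set set" where
  "cutsets V xh ij = {U. U \<subseteq> V \<and> ij \<in> cut V U \<and> cut V U \<inter> {e. xh e = Some 1} = {}}"

end

theory Submission
  imports Defs
begin

text \<open>
  On every pair outside \<open>dom xh\<close> the vector \<open>x\<^sup>+\<close> takes the value maximising the summand
  \<open>c\<^sub>e x\<^sub>e\<close>, so \<open>\<phi>\<^sub>c(x) \<le> \<phi>\<^sub>c(x\<^sup>+)\<close> termwise for every \<open>x \<in> X\<^sub>V[xh]\<close>; since \<open>x\<^sup>+\<^sub>i\<^sub>j = 1\<close>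
  this gives the first claim.
  A feasible \<open>x\<close> with \<open>x\<^sub>i\<^sub>j = 0\<close> vanishes on the cut of \<open>U = {i} \<union> {p | x\<^sub>i\<^sub>p = 1}\<close> by
  transitivity, and \<open>U\<close> separates \<open>i\<close> from \<open>j\<close> without cutting a pair fixed to 1; hence
  \<open>\<phi>\<^sub>c(x) \<le> \<phi>\<^sub>c(\<sigma>\<^sub>U(x\<^sup>+))\<close>. Conversely every \<open>\<sigma>\<^sub>U(x\<^sup>+)\<close> with \<open>U \<in> \<U>\<close> is feasible with
  \<open>ij\<close>-entry 0, which gives the second claim. On such a cut \<open>x\<^sup>+\<close> contributes \<open>c\<^sub>e\<^sup>+\<close>
  except on pairs fixed to 0, which gives the third. Maximal specificity of \<open>xh\<close> is needed only to
  make the sets over which the maxima are taken nonempty.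
\<close>

lemma Max_const_minus_image:
  fixes f :: "'b \<Rightarrow> 'c :: linordered_ab_group_add"
  assumes "finite S" and "S \<noteq> {}"
  shows "Max ((\<lambda>s. a - f s) ` S) = a - Min (f ` S)"
proof -
  have "Max ((\<lambda>s. a - f s) ` S) = Max ((\<lambda>s. - f s) ` S) + a"
    using Max_add_commute[OF assms, of "\<lambda>s. - f s" a] by simp
  also have "Max ((\<lambda>s. - f s) ` S) = - Min (f ` S)"
    using assms by (simp add: image_image)
  finally show ?thesis by simp
qed

lemma finite_pairs: "finite V \<Longrightarrow> finite (pairs V)"
  by (rule finite_subset[of _ "V \<times> V"]) (auto simp: pairs_def)

lemma cut_subset_pairs: "U \<subseteq> V \<Longrightarrow> cut V U \<subseteq> pairs V"
  by (auto simp: cut_def pairs_def)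

lemma feasible_01: "x \<in> feasible V \<Longrightarrow> e \<in> pairs V \<Longrightarrow> x e \<in> {0, 1}"
  by (auto simp: feasible_def)

lemma feasible_outside_pairs: "x \<in> feasible V \<Longrightarrow> e \<notin> pairs V \<Longrightarrow> x e = 0"
  unfolding feasible_def by blast

lemma feasible_transitive:
  assumes x: "x \<in> feasible V" and "x (p, q) = 1" and "x (q, r) = 1" and "p \<noteq> r"
  shows "x (p, r) = 1"
proof -
  have "(p, q) \<in> pairs V" "(q, r) \<in> pairs V"
    using assms feasible_outside_pairs[OF x] by fastforce+
  then have V: "p \<in> V" "q \<in> V" "r \<in> V" "p \<noteq> q" "q \<noteq> r"
    by (auto simp: pairs_def)
  then have "x (p, q) + x (q, r) - x (p, r) \<le> 1"
    using x \<open>p \<noteq> r\<close> by (auto simp: feasible_def)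
  moreover have "x (p, r) \<in> {0, 1}"
    using V \<open>p \<noteq> r\<close> by (intro feasible_01[OF x]) (auto simp: pairs_def)
  ultimately show ?thesis using assms(2,3) by auto
qed

lemma finite_feasible: "finite V \<Longrightarrow> finite (feasible V)"
proof -
  assume "finite V"
  have "feasible V \<subseteq> {x. \<forall>e. (e \<in> pairs V \<longrightarrow> x e \<in> {0, 1}) \<and> (e \<notin> pairs V \<longrightarrow> x e = 0)}"
    by (auto simp: feasible_def)
  moreover have "finite {x. \<forall>e. (e \<in> pairs V \<longrightarrow> x e \<in> ({0, 1} :: int set)) \<and>
      (e \<notin> pairs V \<longrightarrow> x e = 0)}"
    by (rule finite_set_of_finite_funs) (use \<open>finite V\<close> finite_pairs in auto)
  ultimately show ?thesis by (rule finite_subset)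
qed

lemma finite_feasible_restr: "finite V \<Longrightarrow> finite (feasible_restr V xh)"
  by (rule finite_subset[OF _ finite_feasible]) (auto simp: feasible_restr_def)

lemma feasible_restr_dom: "x \<in> feasible_restr V xh \<Longrightarrow> xh e = Some b \<Longrightarrow> x e = b"
  using domI[of xh e b] by (force simp: feasible_restr_def)

lemma partial_fun_values: "partial_fun V xh \<Longrightarrow> xh e = Some b \<Longrightarrow> b \<in> {0, 1}"
  using ranI[of xh e b] by (auto simp: partial_fun_def)

lemma max_specific_attains_value:
  assumes "max_specific V xh" and "e \<in> pairs V" and "e \<notin> dom xh" and "b \<in> {0, 1}"
  obtains x where "x \<in> feasible_restr V xh" and "x e = b"
proof -
  have "e \<notin> decided V xh" using assms(1,3) by (simp add: max_specific_def)
  then obtain x x' where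
    x: "x \<in> feasible_restr V xh" and x': "x' \<in> feasible_restr V xh" and "x e \<noteq> x' e"
    using \<open>e \<in> pairs V\<close> unfolding decided_def by blast
  moreover have "x e \<in> {0, 1}" "x' e \<in> {0, 1}"
    using x x' feasible_01[of x V e] feasible_01[of x' V e] \<open>e \<in> pairs V\<close>
    by (auto simp: feasible_restr_def)
  ultimately show ?thesis using that \<open>b \<in> {0, 1}\<close> by auto
qed

lemma summand_le_xplus:
  assumes "x \<in> feasible_restr V xh" and "e \<in> pairs V"
  shows "c e * of_int (x e) \<le> c e * of_int (xplus V c xh e)"
proof (cases "xh e")
  case None
  with assms show ?thesis
    by (auto simp: xplus_def feasible_restr_def dest: feasible_01)
next
  case (Some b)
  with assms show ?thesis by (simp add: xplus_def feasible_restr_dom)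
qed

lemma phi_le_xplus: "x \<in> feasible_restr V xh \<Longrightarrow> phi c V x \<le> phi c V (xplus V c xh)"
  unfolding phi_def by (rule sum_mono) (rule summand_le_xplus)

lemma sigma_feasible:
  assumes x: "x \<in> feasible V"
  shows "sigma V U x \<in> feasible V"
  unfolding feasible_def
proof (intro CollectI conjI ballI allI impI)
  fix e assume "e \<in> pairs V"
  then show "sigma V U x e \<in> {0, 1}" using feasible_01[OF x] by (simp add: sigma_def)
next
  fix e assume "e \<notin> pairs V"
  then show "sigma V U x e = 0" using x by (simp add: sigma_def feasible_outside_pairs)
next
  fix p q r assume V: "p \<in> V" "q \<in> V" "r \<in> V" and "p \<noteq> q \<and> q \<noteq> r \<and> p \<noteq> r"
  moreover have "x (p, q) + x (q, r) - x (p, r) \<le> 1"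
    using x V \<open>p \<noteq> q \<and> q \<noteq> r \<and> p \<noteq> r\<close> by (auto simp: feasible_def)
  moreover have "x (p, q) \<in> {0, 1}" "x (q, r) \<in> {0, 1}" "x (p, r) \<in> {0, 1}"
    using feasible_01[OF x] V \<open>p \<noteq> q \<and> q \<noteq> r \<and> p \<noteq> r\<close> by (auto simp: pairs_def)
  ultimately show "sigma V U x (p, q) + sigma V U x (q, r) - sigma V U x (p, r) \<le> 1"
    by (auto simp: sigma_def cut_def)
qed

lemma sigma_feasible_restr:
  assumes "partial_fun V xh" and x: "x \<in> feasible_restr V xh"
    and no_one: "cut V U \<inter> {e. xh e = Some 1} = {}"
  shows "sigma V U x \<in> feasible_restr V xh"
  unfolding feasible_restr_def
proof (intro CollectI conjI ballI)
  show "sigma V U x \<in> feasible V"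
    using x by (simp add: feasible_restr_def sigma_feasible)
next
  fix e assume "e \<in> dom xh"
  then obtain b where b: "xh e = Some b" by auto
  have "b = 0" if "e \<in> cut V U"
    using partial_fun_values[OF assms(1) b] no_one that b by auto
  then show "xh e = Some (sigma V U x e)"
    using b feasible_restr_dom[OF x b] by (auto simp: sigma_def)
qed

lemma feasible_vanishes_on_cut_of_successors:
  assumes x: "x \<in> feasible V" and "e \<in> cut V (insert i {p. x (i, p) = 1})"
  shows "x e = 0"
proof -
  obtain p q where e: "e = (p, q)" and q: "q \<in> V" "q \<noteq> i" "x (i, q) \<noteq> 1"
    and p: "p = i \<or> x (i, p) = 1"
    using assms(2) by (cases e) (auto simp: cut_def)
  have "x (p, q) \<noteq> 1"
    using p q feasible_transitive[OF x, of i p q] by auto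
  then show ?thesis
    using e feasible_01[OF x] feasible_outside_pairs[OF x] by (metis insert_iff singletonD)
qed

lemma successors_in_cutsets:
  assumes x: "x \<in> feasible_restr V xh" and "(i, j) \<in> pairs V" and "x (i, j) = 0"
  shows "insert i {p. x (i, p) = 1} \<in> cutsets V xh (i, j)"
proof -
  let ?U = "insert i {p. x (i, p) = 1}"
  have xV: "x \<in> feasible V" using x by (simp add: feasible_restr_def)
  have "p \<in> V" if "x (i, p) = 1" for p
    using feasible_outside_pairs[OF xV, of "(i, p)"] that by (auto simp: pairs_def)
  then have "?U \<subseteq> V"
    using \<open>(i, j) \<in> pairs V\<close> by (auto simp: pairs_def)
  moreover have "(i, j) \<in> cut V ?U"
    using assms(2,3) by (auto simp: cut_def pairs_def)
  moreover have "xh e \<noteq> Some 1" if "e \<in> cut V ?U" for e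
    using feasible_vanishes_on_cut_of_successors[OF xV that] feasible_restr_dom[OF x, of e 1]
    by auto
  ultimately show ?thesis by (auto simp: cutsets_def)
qed

lemma phi_le_sigma_xplus:
  assumes x: "x \<in> feasible_restr V xh" and zero: "\<And>e. e \<in> cut V U \<Longrightarrow> x e = 0"
  shows "phi c V x \<le> phi c V (sigma V U (xplus V c xh))"
  unfolding phi_def
proof (rule sum_mono)
  fix e assume "e \<in> pairs V"
  then show "c e * of_int (x e) \<le> c e * of_int (sigma V U (xplus V c xh) e)"
    using zero[of e] summand_le_xplus[OF x] by (auto simp: sigma_def)
qed

lemma dominating_cutset:
  assumes x: "x \<in> feasible_restr V xh" and "ij \<in> pairs V" and "x ij = 0"
  obtains U where "U \<in> cutsets V xh ij"
    and "phi c V x \<le> phi c V (sigma V U (xplus V c xh))"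
proof -
  obtain i j where ij: "ij = (i, j)" by fastforce
  let ?U = "insert i {p. x (i, p) = 1}"
  have xV: "x \<in> feasible V" using x by (simp add: feasible_restr_def)
  have "?U \<in> cutsets V xh ij"
    using successors_in_cutsets[OF x] assms(2,3) by (simp add: ij)
  moreover have "phi c V x \<le> phi c V (sigma V ?U (xplus V c xh))"
    using x by (rule phi_le_sigma_xplus) (rule feasible_vanishes_on_cut_of_successors[OF xV])
  ultimately show ?thesis by (rule that)
qed

lemma phi_sigma:
  assumes "finite V" and "U \<subseteq> V"
  shows "phi c V (sigma V U x) = phi c V x - (\<Sum>e\<in>cut V U. c e * of_int (x e))"
proof -
  have "phi c V x = phi c V (sigma V U x) + (\<Sum>e\<in>pairs V \<inter> cut V U. c e * of_int (x e))"
    unfolding phi_def sum.inter_restrict[OF finite_pairs[OF \<open>finite V\<close>]] sum.distrib[symmetric]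
    by (rule sum.cong) (auto simp: sigma_def)
  moreover have "pairs V \<inter> cut V U = cut V U"
    using cut_subset_pairs[OF \<open>U \<subseteq> V\<close>] by blast
  ultimately show ?thesis by simp
qed

lemma phi_sigma_xplus:
  assumes "finite V" and "partial_fun V xh" and U: "U \<in> cutsets V xh ij"
  shows "phi c V (sigma V U (xplus V c xh))
    = phi c V (xplus V c xh) - (\<Sum>e\<in>cut V U - {e. xh e = Some 0}. max (c e) 0)"
proof -
  have "U \<subseteq> V" and no_one: "cut V U \<inter> {e. xh e = Some 1} = {}"
    using U by (auto simp: cutsets_def)
  have fin: "finite (cut V U)"
    using cut_subset_pairs[OF \<open>U \<subseteq> V\<close>] finite_pairs[OF \<open>finite V\<close>] by (rule finite_subset)
  have "(\<Sum>e\<in>cut V U. c e * of_int (xplus V c xh e))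
      = (\<Sum>e\<in>cut V U. if xh e = Some 0 then 0 else max (c e) 0)"
  proof (rule sum.cong[OF refl])
    fix e assume e: "e \<in> cut V U"
    then have "e \<in> pairs V" using cut_subset_pairs[OF \<open>U \<subseteq> V\<close>] by blast
    moreover have "xh e = None \<or> xh e = Some 0"
      using partial_fun_values[OF assms(2), of e] no_one e by (cases "xh e") auto
    ultimately show "c e * of_int (xplus V c xh e) = (if xh e = Some 0 then 0 else max (c e) 0)"
      by (auto simp: xplus_def)
  qed
  also have "\<dots> = (\<Sum>e\<in>cut V U - {e. xh e = Some 0}. max (c e) 0)"
    using fin by (simp add: sum.If_cases Diff_eq)
  finally show ?thesis by (simp add: phi_sigma[OF \<open>finite V\<close> \<open>U \<subseteq> V\<close>])
qed

lemma finite_cutsets: "finite V \<Longrightarrow> finite (cutsets V xh ij)"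
  by (rule finite_subset[of _ "Pow V"]) (auto simp: cutsets_def)

lemma Max_phi_sigma_xplus:
  assumes "finite V" and "partial_fun V xh" and "cutsets V xh ij \<noteq> {}"
  shows "Max ((\<lambda>U. phi c V (sigma V U (xplus V c xh))) ` cutsets V xh ij)
    = phi c V (xplus V c xh)
      - Min ((\<lambda>U. \<Sum>e\<in>cut V U - {e. xh e = Some 0}. max (c e) 0) ` cutsets V xh ij)"
proof -
  have "(\<lambda>U. phi c V (sigma V U (xplus V c xh))) ` cutsets V xh ij
      = (\<lambda>U. phi c V (xplus V c xh) - (\<Sum>e\<in>cut V U - {e. xh e = Some 0}. max (c e) 0))
        ` cutsets V xh ij"
    using phi_sigma_xplus[OF assms(1,2)] by (rule image_cong[OF refl])
  then show ?thesis
    using Max_const_minus_image[OF finite_cutsets[OF \<open>finite V\<close>] \<open>cutsets V xh ij \<noteq> {}\<close>]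
    by simp
qed

theorem proposition7p2:
  fixes V :: "'a set" and c :: "'a \<times> 'a \<Rightarrow> real" and xh :: "'a \<times> 'a \<Rightarrow> int option"
    and ij :: "'a \<times> 'a"
  assumes "finite V" and "V \<noteq> {}"
    and "partial_fun V xh" and "max_specific V xh"
    and "ij \<in> pairs V" and "ij \<notin> dom xh" and "c ij \<ge> 0"
    and "xplus V c xh \<in> feasible_restr V xh"
  shows "Max (phi c V ` {x \<in> feasible_restr V xh. x ij = 1}) = phi c V (xplus V c xh)
    \<and> Max (phi c V ` {x \<in> feasible_restr V xh. x ij = 0})
           = Max ((\<lambda>U. phi c V (sigma V U (xplus V c xh))) ` cutsets V xh ij)
    \<and> Max ((\<lambda>U. phi c V (sigma V U (xplus V c xh))) ` cutsets V xh ij)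
           = phi c V (xplus V c xh)
             - Min ((\<lambda>U. \<Sum>e\<in>cut V U - {e. xh e = Some 0}. max (c e) 0) ` cutsets V xh ij)"
proof -
  have fin: "finite (feasible_restr V xh)" using \<open>finite V\<close> by (rule finite_feasible_restr)
  have "xplus V c xh ij = 1" using assms(5-7) by (auto simp: xplus_def domIff)
  then have one: "Max (phi c V ` {x \<in> feasible_restr V xh. x ij = 1}) = phi c V (xplus V c xh)"
    using fin assms(8) phi_le_xplus by (intro Max_eqI) auto
  obtain x0 where "x0 \<in> feasible_restr V xh" and "x0 ij = 0"
    using max_specific_attains_value assms(4-6) by blast
  then have "cutsets V xh ij \<noteq> {}"
    using dominating_cutset assms(5) by blast
  have "sigma V U (xplus V c xh) \<in> {x \<in> feasible_restr V xh. x ij = 0}"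
    if "U \<in> cutsets V xh ij" for U
    using that sigma_feasible_restr[OF assms(3,8)] by (auto simp: cutsets_def sigma_def)
  then have two: "Max (phi c V ` {x \<in> feasible_restr V xh. x ij = 0})
      = Max ((\<lambda>U. phi c V (sigma V U (xplus V c xh))) ` cutsets V xh ij)"
    using fin finite_cutsets[OF assms(1)] dominating_cutset[OF _ assms(5)]
    by (intro Max_eq_if) (auto, blast)
  show ?thesis
    using one two Max_phi_sigma_xplus[OF assms(1,3) \<open>cutsets V xh ij \<noteq> {}\<close>] by simp
qed

end
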